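(* Let $d\ge 1$, $\sigma>0$, $a>0$, $\vartheta\in[0,1)$ and let $\tau\ge 1$ be an integer. Let $u_1,\dots,u_\tau$ be independent random vectors with $u_k\sim N(0,\sigma^2 I_d)$, and set $v_k=a\,u_k$ (the noise added at the $k$-th iteration of a stepwise interval of length $\tau$ during which the noise factor $a$ is constant). Define the progressively fused noise recursively by $\tilde N_1=v_1$ and $\tilde N_k=(1-\vartheta)v_k+\vartheta\tilde N_{k-1}$ for $k=2,\dots,\tau$. Then $$\mathbb{E}\big[\|\tilde N_\tau\|^2\big]=\Big(\frac{1-\vartheta}{1+\vartheta}+\frac{2}{1+\vartheta}\vartheta^{2\tau-1}\Big)\,\mathbb{E}\big[\|v_1\|^2\big].$$
   Context: This describes the noise component of the progressive gradient fusion (PGF) update $\tilde g_i^t=(1-\vartheta)\bar g_i^t+\vartheta\tilde g_i^{t-1}$, which is applied while the noise factor stays constant and restarted ($\tilde g$ set to the current noisy gradient) at the beginning of each interval of length $\tau$; each noisy gradient carries independent Gaussian noise of the same scale within the interval. $\|\cdot\|$ is the Euclidean norm. *)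

theory Defs
  imports "HOL-Probability.Probability"
begin

text \<open>Progressively fused noise: N_1 = v_1, N_k = (1 - th) v_k + th N_{k-1} for k >= 2.
  The value at index 0 is an irrelevant junk value.\<close>
fun pgf_noise :: "real \<Rightarrow> (nat \<Rightarrow> 'a \<Rightarrow> 'b::real_vector) \<Rightarrow> nat \<Rightarrow> 'a \<Rightarrow> 'b" where
  "pgf_noise th v 0 = (\<lambda>x. 0)"
| "pgf_noise th v (Suc 0) = v 1"
| "pgf_noise th v (Suc (Suc k)) =
     (\<lambda>x. (1 - th) *\<^sub>R v (Suc (Suc k)) x + th *\<^sub>R pgf_noise th v (Suc k) x)"

end

theory Submission
  imports Defs
begin

text \<open>Unrolling the recursion, \<open>N\<^sub>\<tau> = \<Sum>\<^sub>k w\<^sub>k v\<^sub>k\<close> with \<open>w\<^sub>1 = \<theta>\<^sup>\<tau>\<^sup>-\<^sup>1\<close> and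
  \<open>w\<^sub>k = (1 - \<theta>) \<theta>\<^sup>\<tau>\<^sup>-\<^sup>k\<close> for \<open>k \<ge> 2\<close>. The \<open>v\<^sub>k\<close> are independent and centred, so all cross
  terms of \<open>E \<parallel>N\<^sub>\<tau>\<parallel>\<^sup>2\<close> vanish and it equals \<open>(\<Sum>\<^sub>k w\<^sub>k\<^sup>2) E \<parallel>v\<^sub>1\<parallel>\<^sup>2\<close>; the geometric sum
  \<open>\<Sum>\<^sub>k w\<^sub>k\<^sup>2\<close> is the stated factor.\<close>

definition pgf_weight :: "real \<Rightarrow> nat \<Rightarrow> nat \<Rightarrow> real" where
  "pgf_weight th n k = (if k = 1 then th ^ (n - 1) else (1 - th) * th ^ (n - k))"

lemma pgf_weight_Suc:
  assumes "k \<in> {1..n}"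
  shows "pgf_weight th (Suc n) k = th * pgf_weight th n k"
  using assms by (auto simp: pgf_weight_def Suc_diff_le simp flip: power_Suc)

lemma pgf_noise_eq_sum:
  fixes v :: "nat \<Rightarrow> 'a \<Rightarrow> 'b::real_vector"
  assumes "1 \<le> n"
  shows "pgf_noise th v n x = (\<Sum>k=1..n. pgf_weight th n k *\<^sub>R v k x)"
  using assms
proof (induction n rule: nat_induct_at_least)
  case base
  then show ?case by (simp add: pgf_weight_def)
next
  case (Suc n)
  then obtain m where n: "n = Suc m" by (cases n) auto
  have "(\<Sum>k=1..n. pgf_weight th (Suc n) k *\<^sub>R v k x)
      = (\<Sum>k=1..n. (th * pgf_weight th n k) *\<^sub>R v k x)"
    by (rule sum.cong) (simp_all add: pgf_weight_Suc)
  then have "(\<Sum>k=1..Suc n. pgf_weight th (Suc n) k *\<^sub>R v k x)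
      = (1 - th) *\<^sub>R v (Suc n) x + (\<Sum>k=1..n. (th * pgf_weight th n k) *\<^sub>R v k x)"
    using \<open>1 \<le> n\<close> by (simp add: pgf_weight_def)
  also have "\<dots> = (1 - th) *\<^sub>R v (Suc n) x + th *\<^sub>R pgf_noise th v n x"
    by (simp add: Suc.IH scaleR_sum_right)
  finally show ?case by (simp add: n)
qed

lemma sum_pgf_weight_squares:
  assumes "1 + th \<noteq> 0" and "1 \<le> n"
  shows "(\<Sum>k=1..n. (pgf_weight th n k)\<^sup>2)
           = (1 - th) / (1 + th) + 2 / (1 + th) * th ^ (2 * n - 1)"
  using assms(2)
proof (induction n rule: nat_induct_at_least)
  case base
  have "(1 + th)\<^sup>2 \<noteq> 0" using assms(1) by simp
  with assms(1) show ?case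
    by (simp add: pgf_weight_def field_simps power2_eq_square)
next
  case (Suc n)
  have "(\<Sum>k=1..n. (pgf_weight th (Suc n) k)\<^sup>2) = th\<^sup>2 * (\<Sum>k=1..n. (pgf_weight th n k)\<^sup>2)"
    unfolding sum_distrib_left by (rule sum.cong) (simp_all add: pgf_weight_Suc power_mult_distrib)
  then have "(\<Sum>k=1..Suc n. (pgf_weight th (Suc n) k)\<^sup>2)
      = (1 - th)\<^sup>2 + th\<^sup>2 * (\<Sum>k=1..n. (pgf_weight th n k)\<^sup>2)"
    using \<open>1 \<le> n\<close> by (simp add: pgf_weight_def)
  also have "\<dots> = (1 - th) / (1 + th) + 2 / (1 + th) * (th\<^sup>2 * th ^ (2 * n - 1))"
    unfolding Suc.IH using assms(1) by (simp add: divide_simps) algebra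
  also have "th\<^sup>2 * th ^ (2 * n - 1) = th ^ (2 * Suc n - 1)"
    using \<open>1 \<le> n\<close> by (simp flip: power_add)
  finally show ?case .
qed

lemma (in prob_space) indep_vars_imp_indep_var:
  assumes "indep_vars M' X I" and "k \<in> I" "l \<in> I" "k \<noteq> l"
  shows "indep_var (M' k) (X k) (M' l) (X l)"
proof -
  have "indep_var (PiM {k} M') (\<lambda>\<omega>. restrict (\<lambda>i. X i \<omega>) {k})
          (PiM {l} M') (\<lambda>\<omega>. restrict (\<lambda>i. X i \<omega>) {l})"
    by (rule indep_var_restrict[OF assms(1)]) (use assms in auto)
  then have "indep_var (M' k) ((\<lambda>f. f k) \<circ> (\<lambda>\<omega>. restrict (\<lambda>i. X i \<omega>) {k}))
              (M' l) ((\<lambda>f. f l) \<circ> (\<lambda>\<omega>. restrict (\<lambda>i. X i \<omega>) {l}))"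
    by (rule indep_var_compose) measurable
  then show ?thesis by (simp add: comp_def)
qed

lemma (in prob_space) has_bochner_integral_square_sum_indep:
  fixes X :: "'i \<Rightarrow> 'a \<Rightarrow> real"
  assumes "finite I" and indep: "indep_vars (\<lambda>_. borel) X I"
    and integrable: "\<And>k. k \<in> I \<Longrightarrow> integrable M (X k)"
    and centered: "\<And>k. k \<in> I \<Longrightarrow> expectation (X k) = 0"
    and second_moment: "\<And>k. k \<in> I \<Longrightarrow> has_bochner_integral M (\<lambda>x. (X k x)\<^sup>2) (s k)"
  shows "has_bochner_integral M (\<lambda>x. (\<Sum>k\<in>I. c k * X k x)\<^sup>2) (\<Sum>k\<in>I. (c k)\<^sup>2 * s k)"
proof -
  have products: "has_bochner_integral M (\<lambda>x. X k x * X l x) (if k = l then s k else 0)"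
    if "k \<in> I" "l \<in> I" for k l
  proof (cases "k = l")
    case True
    then show ?thesis using second_moment[OF that(1)] by (simp add: power2_eq_square)
  next
    case False
    then have indep_kl: "indep_var borel (X k) borel (X l)"
      using indep_vars_imp_indep_var[OF indep that] by simp
    note factors = indep_kl integrable[OF that(1)] integrable[OF that(2)]
    show ?thesis
      using indep_var_integrable[OF factors] indep_var_lebesgue_integral[OF factors]
        centered[OF that(1)] False
      by (simp add: has_bochner_integral_iff)
  qed
  have "(\<Sum>k\<in>I. c k * X k x)\<^sup>2 = (\<Sum>k\<in>I. \<Sum>l\<in>I. c k * c l * (X k x * X l x))" for x
    by (simp add: power2_eq_square sum_product mult_ac)
  moreover have "has_bochner_integral M (\<lambda>x. \<Sum>k\<in>I. \<Sum>l\<in>I. c k * c l * (X k x * X l x))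
      (\<Sum>k\<in>I. \<Sum>l\<in>I. c k * c l * (if k = l then s k else 0))"
    by (intro has_bochner_integral_sum has_bochner_integral_mult_right products)
  moreover have "(\<Sum>k\<in>I. \<Sum>l\<in>I. c k * c l * (if k = l then s k else 0)) = (\<Sum>k\<in>I. (c k)\<^sup>2 * s k)"
    using \<open>finite I\<close> by (simp add: if_distrib[of "\<lambda>z. _ * z"] sum.delta power2_eq_square cong: if_cong)
  ultimately show ?thesis by simp
qed

lemma (in prob_space) centered_normal_moments:
  assumes "0 < \<sigma>" and normal: "distributed M lborel X (\<lambda>y. ennreal (normal_density 0 \<sigma> y))"
  shows "integrable M X" and "expectation X = 0"
    and "has_bochner_integral M (\<lambda>x. (X x)\<^sup>2) (\<sigma>\<^sup>2)"
proof -
  show "integrable M X"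
    using distributed_integrable_var[OF normal] integrable_normal_moment_nz_1[OF \<open>0 < \<sigma>\<close>] by simp
  show "expectation X = 0"
    using normal_distributed_expectation[OF \<open>0 < \<sigma>\<close>] normal by simp
  have "integrable M (\<lambda>x. (X x)\<^sup>2)"
    using distributed_integrable[OF normal, of "\<lambda>y. y\<^sup>2"] integrable_normal_moment[OF \<open>0 < \<sigma>\<close>, of 0 2]
    by simp
  moreover have "expectation (\<lambda>x. (X x)\<^sup>2) = \<sigma>\<^sup>2"
    using distributed_integral[OF normal, of "\<lambda>y. y\<^sup>2"] integral_normal_moment_even[OF \<open>0 < \<sigma>\<close>, of 0 1]
    by (simp add: power2_eq_square)
  ultimately show "has_bochner_integral M (\<lambda>x. (X x)\<^sup>2) (\<sigma>\<^sup>2)"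
    by (simp add: has_bochner_integral_iff)
qed

lemma (in prob_space) has_bochner_integral_norm_square_sum_indep:
  fixes V :: "'i \<Rightarrow> 'a \<Rightarrow> real ^ 'n" and c :: "'i \<Rightarrow> real" and s :: real
  assumes "finite I" and indep: "indep_vars (\<lambda>_. borel) V I"
    and "\<And>k i. k \<in> I \<Longrightarrow> integrable M (\<lambda>x. V k x $ i)"
    and "\<And>k i. k \<in> I \<Longrightarrow> expectation (\<lambda>x. V k x $ i) = 0"
    and "\<And>k i. k \<in> I \<Longrightarrow> has_bochner_integral M (\<lambda>x. (V k x $ i)\<^sup>2) s"
  shows "has_bochner_integral M (\<lambda>x. (norm (\<Sum>k\<in>I. c k *\<^sub>R V k x))\<^sup>2)
           (CARD('n) * s * (\<Sum>k\<in>I. (c k)\<^sup>2))"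
proof -
  have "(norm (\<Sum>k\<in>I. c k *\<^sub>R V k x))\<^sup>2 = (\<Sum>i\<in>UNIV. (\<Sum>k\<in>I. c k * V k x $ i)\<^sup>2)" for x
    unfolding power2_norm_eq_inner inner_vec_def by (simp add: power2_eq_square)
  moreover have "has_bochner_integral M (\<lambda>x. \<Sum>i\<in>UNIV. (\<Sum>k\<in>I. c k * V k x $ i)\<^sup>2)
      (\<Sum>i\<in>(UNIV :: 'n set). \<Sum>k\<in>I. (c k)\<^sup>2 * s)"
    by (intro has_bochner_integral_sum has_bochner_integral_square_sum_indep
        indep_vars_compose2[OF indep]) (simp_all add: assms)
  ultimately show ?thesis
    by (simp add: sum_distrib_left sum_distrib_right mult_ac)
qed

theorem lemma3:
  fixes M :: "'m measure"
    and u :: "nat \<Rightarrow> 'm \<Rightarrow> real ^ 'd"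
    and \<sigma> a \<theta> :: real and \<tau> :: nat
  assumes "prob_space M"
    and "\<sigma> > 0" and "a > 0" and "0 \<le> \<theta>" and "\<theta> < 1" and "\<tau> \<ge> 1"
    and "prob_space.indep_vars M (\<lambda>_. borel) u {1..\<tau>}"
    and "\<And>k. k \<in> {1..\<tau>} \<Longrightarrow>
           prob_space.indep_vars M (\<lambda>_. borel) (\<lambda>i x. u k x $ i) UNIV"
    and "\<And>k i. k \<in> {1..\<tau>} \<Longrightarrow>
           distributed M lborel (\<lambda>x. u k x $ i) (\<lambda>y. ennreal (normal_density 0 \<sigma> y))"
  shows "(\<integral>x. (norm (pgf_noise \<theta> (\<lambda>k x. a *\<^sub>R u k x) \<tau> x))\<^sup>2 \<partial>M)
         = ((1 - \<theta>) / (1 + \<theta>) + 2 / (1 + \<theta>) * \<theta> ^ (2 * \<tau> - 1))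
           * (\<integral>x. (norm (a *\<^sub>R u 1 x))\<^sup>2 \<partial>M)"
proof -
  \<comment> \<open>Independence of the coordinates of each \<open>u k\<close> is not needed: the cross terms
    already vanish coordinatewise by independence across \<open>k\<close>.\<close>
  interpret prob_space M by fact
  define w where "w k = a * pgf_weight \<theta> \<tau> k" for k
  note moments = centered_normal_moments[OF \<open>\<sigma> > 0\<close> assms(9)]
  have "pgf_noise \<theta> (\<lambda>k x. a *\<^sub>R u k x) \<tau> x = (\<Sum>k\<in>{1..\<tau>}. w k *\<^sub>R u k x)" for x
    by (simp add: pgf_noise_eq_sum[OF \<open>\<tau> \<ge> 1\<close>] w_def mult.commute)
  then have "has_bochner_integral M (\<lambda>x. (norm (pgf_noise \<theta> (\<lambda>k x. a *\<^sub>R u k x) \<tau> x))\<^sup>2)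
      (CARD('d) * \<sigma>\<^sup>2 * (\<Sum>k\<in>{1..\<tau>}. (w k)\<^sup>2))"
    using has_bochner_integral_norm_square_sum_indep[OF _ assms(7) moments] by simp
  moreover have "has_bochner_integral M (\<lambda>x. (norm (a *\<^sub>R u 1 x))\<^sup>2) (CARD('d) * \<sigma>\<^sup>2 * a\<^sup>2)"
    using has_bochner_integral_norm_square_sum_indep[where I="{1}" and V=u and c="\<lambda>_. a" and s="\<sigma>\<^sup>2"]
      indep_vars_subset[OF assms(7)] moments \<open>\<tau> \<ge> 1\<close>
    by simp
  moreover have "(\<Sum>k\<in>{1..\<tau>}. (w k)\<^sup>2)
      = a\<^sup>2 * ((1 - \<theta>) / (1 + \<theta>) + 2 / (1 + \<theta>) * \<theta> ^ (2 * \<tau> - 1))"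
    using sum_pgf_weight_squares[of \<theta> \<tau>] \<open>0 \<le> \<theta>\<close> \<open>\<tau> \<ge> 1\<close>
    by (simp add: w_def power_mult_distrib flip: sum_distrib_left)
  ultimately show ?thesis
    by (simp add: has_bochner_integral_integral_eq)
qed

end
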